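(* Let $0<a\le1$ and let $b$ satisfy $\max\{2a,1\}\le b\le a+1$. Then there exists a compact set $X\subset[0,1]$ with $\overline{\dim}_B(X)=a$ and $\overline{\dim}_{GB}(X)=b$.
   Context: For $\delta>0$ and $F\subset\mathbb{R}^d$, $N_\delta(F)$ is the number of cubes of the standard $\delta$-grid in $\mathbb{R}^d$ that intersect $F$, and $\overline{\dim}_B(F)=\limsup_{\delta\to0}\frac{\log N_\delta(F)}{-\log\delta}$. $C_u(X)$ is the set of uniformly continuous real functions on $X$, $\mathrm{graph}(f)=\{(x,f(x)):x\in X\}$, and $\overline{\dim}_{GB}(X)=\sup_{f\in C_u(X)}\overline{\dim}_B(\mathrm{graph}(f))$. *)

theory Defs
  imports "HOL-Analysis.Analysis"
begin

definition grid_cube :: "real \<Rightarrow> 'a::euclidean_space \<Rightarrow> 'a set" where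
  "grid_cube \<delta> k = {x. \<forall>i\<in>Basis. \<delta> * (k \<bullet> i) \<le> x \<bullet> i \<and> x \<bullet> i \<le> \<delta> * (k \<bullet> i + 1)}"

definition int_lattice :: "'a::euclidean_space set" where
  "int_lattice = {k. \<forall>i\<in>Basis. k \<bullet> i \<in> \<int>}"

definition grid_count :: "real \<Rightarrow> 'a::euclidean_space set \<Rightarrow> nat" where
  "grid_count \<delta> F = card {k \<in> int_lattice. grid_cube \<delta> k \<inter> F \<noteq> {}}"

definition upper_box_dim :: "'a::euclidean_space set \<Rightarrow> ereal" where
  "upper_box_dim F =
     Limsup (at_right 0) (\<lambda>\<delta>. ereal (ln (real (grid_count \<delta> F)) / - ln \<delta>))"

definition graph_of :: "real set \<Rightarrow> (real \<Rightarrow> real) \<Rightarrow> (real \<times> real) set" where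
  "graph_of X f = {(x, f x) | x. x \<in> X}"

definition upper_graph_box_dim :: "real set \<Rightarrow> ereal" where
  "upper_graph_box_dim X =
     (SUP f \<in> {f. uniformly_continuous_on X f}. upper_box_dim (graph_of X f))"

end

theory Submission
  imports Defs "HOL-Real_Asymp.Real_Asymp"
begin

text \<open>The set \<open>X\<close> is \<open>0\<close> together with blocks accumulating at \<open>0\<close>. Block \<open>k\<close> consists of
  about \<open>2^((b-1) k^2)\<close> columns at distance \<open>D = 2^(-k^2)\<close>, each an arithmetic progression
  of \<open>2^(k^2-k)\<close> points with a step \<open>\<eta>\<close> chosen so that the block has about \<open>\<eta>^(-a)\<close>
  points; counting at scale \<open>\<eta>/2\<close> gives \<open>dim_B X \<ge> a\<close>. The sawtooth function lifting the
  \<open>i\<close>-th point of every column to height \<open>i D\<close> is uniformly continuous on \<open>X\<close> and turns the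
  block into a \<open>D\<close>-separated planar grid of about \<open>D^(-b)\<close> points, so the graph dimension
  is at least \<open>b\<close>. Conversely, at scale \<open>\<delta>\<close> each block, and the graph over it of any bounded
  function, meets \<open>O(\<delta>^(-a))\<close> resp. \<open>O(\<delta>^(-b))\<close> cells; only \<open>O(log (1/\<delta>))\<close> blocks have
  column distance above \<open>\<delta>\<close>, and the remaining ones lie in an interval of length
  \<open>O(\<delta>^(2-b))\<close> next to \<open>0\<close>.\<close>

lemma two_powr_mono: "x \<le> y \<Longrightarrow> (2::real) powr x \<le> 2 powr y"
  by (rule powr_mono) auto

lemma two_powr_add_eq: "x + y = z \<Longrightarrow> (2::real) powr x * 2 powr y = 2 powr z"
  using powr_add[of 2 x y] by simp

lemma powr_one_minus: "(0::real) < \<delta> \<Longrightarrow> \<delta> powr (1 - c) = \<delta> * \<delta> powr (- c)"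
  using powr_add[of \<delta> 1 "- c"] by simp

lemma one_le_powr_neg: "(0::real) < \<delta> \<Longrightarrow> \<delta> \<le> 1 \<Longrightarrow> 0 \<le> c \<Longrightarrow> 1 \<le> \<delta> powr (- c)"
  by (simp add: powr_minus one_le_inverse_iff powr_le1)

lemma real_le_square: "real k \<le> (real k)^2"
proof -
  have "k \<le> k^2" by (simp add: power2_eq_square)
  then show ?thesis by (metis of_nat_le_iff of_nat_power)
qed

lemma real_le_two_powr: "real k \<le> 2 powr real k"
proof -
  have "k < 2 ^ k" by (rule less_exp)
  then have "real k < 2 ^ k" by (metis of_nat_less_iff of_nat_numeral of_nat_power)
  then show ?thesis by (simp add: powr_realpow)
qed

section \<open>Counting grid cells\<close>

definition grid_cells :: "real \<Rightarrow> 'a::euclidean_space set \<Rightarrow> 'a set" where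
  "grid_cells \<delta> F = {k \<in> int_lattice. grid_cube \<delta> k \<inter> F \<noteq> {}}"

lemma grid_count_eq_card_grid_cells: "grid_count \<delta> F = card (grid_cells \<delta> F)"
  by (simp add: grid_count_def grid_cells_def)

lemma grid_cells_mono: "F \<subseteq> G \<Longrightarrow> grid_cells \<delta> F \<subseteq> grid_cells \<delta> G"
  by (auto simp: grid_cells_def)

lemma grid_cells_UN: "grid_cells \<delta> (\<Union>i\<in>I. F i) = (\<Union>i\<in>I. grid_cells \<delta> (F i))"
  by (auto simp: grid_cells_def)

lemma grid_cells_Un: "grid_cells \<delta> (F \<union> G) = grid_cells \<delta> F \<union> grid_cells \<delta> G"
  by (auto simp: grid_cells_def)

lemma grid_count_mono:
  "finite (grid_cells \<delta> G) \<Longrightarrow> F \<subseteq> G \<Longrightarrow> grid_count \<delta> F \<le> grid_count \<delta> G"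
  by (simp add: grid_count_eq_card_grid_cells card_mono grid_cells_mono)

lemma grid_count_UN_le:
  "finite I \<Longrightarrow> grid_count \<delta> (\<Union>i\<in>I. F i) \<le> (\<Sum>i\<in>I. grid_count \<delta> (F i))"
  by (simp add: grid_count_eq_card_grid_cells grid_cells_UN card_UN_le)

lemma grid_count_cover_le:
  assumes "finite I" "F \<subseteq> (\<Union>i\<in>I. G i) \<union> T"
    and "finite (grid_cells \<delta> ((\<Union>i\<in>I. G i) \<union> T))"
  shows "real (grid_count \<delta> F) \<le> (\<Sum>i\<in>I. real (grid_count \<delta> (G i))) + real (grid_count \<delta> T)"
proof -
  have "grid_count \<delta> F \<le> grid_count \<delta> ((\<Union>i\<in>I. G i) \<union> T)"
    using assms(2,3) by (rule grid_count_mono[rotated])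
  also have "\<dots> \<le> grid_count \<delta> (\<Union>i\<in>I. G i) + grid_count \<delta> T"
    by (simp add: grid_count_eq_card_grid_cells grid_cells_Un card_Un_le)
  also have "\<dots> \<le> (\<Sum>i\<in>I. grid_count \<delta> (G i)) + grid_count \<delta> T"
    using grid_count_UN_le[OF assms(1)] by simp
  finally show ?thesis
    by (metis of_nat_add of_nat_le_iff of_nat_sum)
qed

lemma floor_divide_bounds:
  fixes x \<delta> :: real
  assumes "\<delta> > 0"
  shows "\<delta> * of_int \<lfloor>x / \<delta>\<rfloor> \<le> x \<and> x \<le> \<delta> * (of_int \<lfloor>x / \<delta>\<rfloor> + 1)"
proof -
  have "\<delta> * of_int \<lfloor>x / \<delta>\<rfloor> \<le> \<delta> * (x / \<delta>)"
    using assms by (intro mult_left_mono) simp_all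
  moreover have "\<delta> * (x / \<delta>) \<le> \<delta> * (of_int \<lfloor>x / \<delta>\<rfloor> + 1)"
    using assms real_of_int_floor_add_one_ge[of "x / \<delta>"] by (intro mult_left_mono) simp_all
  ultimately show ?thesis using assms by simp
qed

text \<open>The cell with corner \<open>\<lfloor>p/\<delta>\<rfloor>\<close> (coordinatewise) contains \<open>p\<close>, and two points
  sharing it are at most \<open>\<delta>\<close> apart in every coordinate.\<close>

lemma card_le_grid_count_if_separated:
  fixes F :: "'a::euclidean_space set"
  assumes "\<delta> > 0" "finite P" "P \<subseteq> F" "finite (grid_cells \<delta> F)"
    and sep: "\<And>p q. p \<in> P \<Longrightarrow> q \<in> P \<Longrightarrow> p \<noteq> q \<Longrightarrow> \<exists>i\<in>Basis. \<delta> < \<bar>p \<bullet> i - q \<bullet> i\<bar>"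
  shows "card P \<le> grid_count \<delta> F"
proof -
  define cell :: "'a \<Rightarrow> 'a" where "cell p = (\<Sum>i\<in>Basis. of_int \<lfloor>(p \<bullet> i) / \<delta>\<rfloor> *\<^sub>R i)" for p
  have cell_coord: "cell p \<bullet> i = of_int \<lfloor>(p \<bullet> i) / \<delta>\<rfloor>" if "i \<in> Basis" for p i
    using that by (simp add: cell_def)
  have "cell ` P \<subseteq> grid_cells \<delta> F"
  proof
    fix c assume "c \<in> cell ` P"
    then obtain p where p: "p \<in> P" "c = cell p" by blast
    have "\<delta> * (c \<bullet> i) \<le> p \<bullet> i \<and> p \<bullet> i \<le> \<delta> * (c \<bullet> i + 1)" if "i \<in> Basis" for i
      using floor_divide_bounds[OF \<open>\<delta> > 0\<close>, of "p \<bullet> i"] p(2) cell_coord[OF that] by simp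
    then have "p \<in> grid_cube \<delta> c" by (simp add: grid_cube_def)
    moreover have "c \<in> int_lattice" using p(2) cell_coord by (simp add: int_lattice_def)
    ultimately show "c \<in> grid_cells \<delta> F" using p(1) assms(3) by (auto simp: grid_cells_def)
  qed
  moreover have "inj_on cell P"
  proof (rule inj_onI, rule ccontr)
    fix p q assume pq: "p \<in> P" "q \<in> P" "cell p = cell q" "p \<noteq> q"
    obtain i where i: "i \<in> Basis" "\<delta> < \<bar>p \<bullet> i - q \<bullet> i\<bar>" using sep[OF pq(1,2,4)] by blast
    have "\<lfloor>(p \<bullet> i) / \<delta>\<rfloor> = \<lfloor>(q \<bullet> i) / \<delta>\<rfloor>" using pq(3) cell_coord[OF i(1)] by (metis of_int_eq_iff)
    then have "\<bar>p \<bullet> i - q \<bullet> i\<bar> \<le> \<delta>"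
      using floor_divide_bounds[OF \<open>\<delta> > 0\<close>, of "p \<bullet> i"] floor_divide_bounds[OF \<open>\<delta> > 0\<close>, of "q \<bullet> i"]
      by (simp add: abs_le_iff algebra_simps)
    then show False using i(2) by simp
  qed
  ultimately have "card P \<le> card (grid_cells \<delta> F)"
    using card_inj_on_le assms(4) by blast
  then show ?thesis by (simp add: grid_count_eq_card_grid_cells)
qed

corollary card_le_grid_count_if_separated_real:
  fixes F :: "real set"
  assumes "\<delta> > 0" "finite P" "P \<subseteq> F" "finite (grid_cells \<delta> F)"
    and "\<And>p q. p \<in> P \<Longrightarrow> q \<in> P \<Longrightarrow> p \<noteq> q \<Longrightarrow> \<delta> < \<bar>p - q\<bar>"
  shows "card P \<le> grid_count \<delta> F"
proof (rule card_le_grid_count_if_separated[OF assms(1-4)])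
  fix p q assume "p \<in> P" "q \<in> P" "p \<noteq> q"
  then show "\<exists>i\<in>Basis. \<delta> < \<bar>p \<bullet> i - q \<bullet> i\<bar>" using assms(5) by (intro bexI[of _ 1]) simp_all
qed

corollary card_le_grid_count_if_separated_prod:
  fixes F :: "(real \<times> real) set"
  assumes "\<delta> > 0" "finite P" "P \<subseteq> F" "finite (grid_cells \<delta> F)"
    and "\<And>p q. p \<in> P \<Longrightarrow> q \<in> P \<Longrightarrow> p \<noteq> q \<Longrightarrow> \<delta> < \<bar>fst p - fst q\<bar> \<or> \<delta> < \<bar>snd p - snd q\<bar>"
  shows "card P \<le> grid_count \<delta> F"
proof (rule card_le_grid_count_if_separated[OF assms(1-4)])
  fix p q assume "p \<in> P" "q \<in> P" "p \<noteq> q"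
  then consider "\<delta> < \<bar>fst p - fst q\<bar>" | "\<delta> < \<bar>snd p - snd q\<bar>" using assms(5) by blast
  then show "\<exists>i\<in>Basis. \<delta> < \<bar>p \<bullet> i - q \<bullet> i\<bar>"
  proof cases
    case 1
    then show ?thesis by (intro bexI[of _ "(1, 0)"]) (simp_all add: Basis_prod_def inner_Pair_0)
  next
    case 2
    then show ?thesis by (intro bexI[of _ "(0, 1)"]) (simp_all add: Basis_prod_def inner_Pair_0)
  qed
qed

lemma card_ceiling_floor_le:
  fixes A B :: real
  assumes "A \<le> B + 1"
  shows "real (card {\<lceil>A\<rceil>..\<lfloor>B\<rfloor>}) \<le> B - A + 1"
proof (cases "\<lceil>A\<rceil> \<le> \<lfloor>B\<rfloor>")
  case True
  then have "real (card {\<lceil>A\<rceil>..\<lfloor>B\<rfloor>}) = of_int (\<lfloor>B\<rfloor> - \<lceil>A\<rceil> + 1)" by simp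
  also have "\<dots> \<le> B - A + 1" using le_of_int_ceiling[of A] of_int_floor_le[of B] by linarith
  finally show ?thesis .
qed (use assms in simp)

lemma cell_index_mem:
  fixes x \<delta> lo hi :: real
  assumes "\<delta> > 0" "\<delta> * of_int n \<le> x" "x \<le> \<delta> * (of_int n + 1)" "lo \<le> x" "x \<le> hi"
  shows "n \<in> {\<lceil>lo / \<delta> - 1\<rceil>..\<lfloor>hi / \<delta>\<rfloor>}"
proof -
  have "lo / \<delta> - 1 \<le> of_int n" "of_int n \<le> hi / \<delta>"
    using assms by (auto simp: field_simps)
  then have "\<lceil>lo / \<delta> - 1\<rceil> \<le> n" "n \<le> \<lfloor>hi / \<delta>\<rfloor>"
    by (simp_all only: ceiling_le_iff le_floor_iff)
  then show ?thesis by simp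
qed

lemma grid_cube_real: "grid_cube \<delta> (k::real) = {\<delta> * k..\<delta> * (k + 1)}"
  and int_lattice_real: "(k::real) \<in> int_lattice \<longleftrightarrow> k \<in> \<int>"
  by (auto simp: grid_cube_def int_lattice_def)

lemma grid_cube_prod:
    "grid_cube \<delta> (k::real \<times> real) = {\<delta> * fst k..\<delta> * (fst k + 1)} \<times> {\<delta> * snd k..\<delta> * (snd k + 1)}"
  and int_lattice_prod: "(k::real \<times> real) \<in> int_lattice \<longleftrightarrow> fst k \<in> \<int> \<and> snd k \<in> \<int>"
  by (auto simp: grid_cube_def int_lattice_def Basis_prod_def inner_Pair_0)

lemma grid_count_interval_le:
  fixes F :: "real set"
  assumes "\<delta> > 0" "F \<subseteq> {lo..hi}" "lo \<le> hi"
  shows "finite (grid_cells \<delta> F)" "real (grid_count \<delta> F) \<le> (hi - lo) / \<delta> + 2"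
proof -
  let ?I = "{\<lceil>lo / \<delta> - 1\<rceil>..\<lfloor>hi / \<delta>\<rfloor>}"
  have sub: "grid_cells \<delta> F \<subseteq> of_int ` ?I"
  proof
    fix k assume "k \<in> grid_cells \<delta> F"
    then obtain x where x: "k \<in> \<int>" "x \<in> F" "\<delta> * k \<le> x" "x \<le> \<delta> * (k + 1)"
      by (auto simp: grid_cells_def grid_cube_real int_lattice_real)
    then obtain n where "k = of_int n" by (auto elim: Ints_cases)
    with x show "k \<in> of_int ` ?I" using cell_index_mem[OF assms(1), of n x] assms(2) by auto
  qed
  then show fin: "finite (grid_cells \<delta> F)" using finite_surj by blast
  have "card (grid_cells \<delta> F) \<le> card (real_of_int ` ?I)" by (rule card_mono[OF _ sub]) simp
  also have "\<dots> \<le> card ?I" by (rule card_image_le) simp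
  finally have "real (grid_count \<delta> F) \<le> real (card ?I)" by (simp add: grid_count_eq_card_grid_cells)
  also have "\<dots> \<le> hi / \<delta> - (lo / \<delta> - 1) + 1"
    using divide_right_mono[OF assms(3), of \<delta>] assms(1) by (intro card_ceiling_floor_le) simp
  finally show "real (grid_count \<delta> F) \<le> (hi - lo) / \<delta> + 2" by (simp add: diff_divide_distrib)
qed

lemma grid_count_rectangle_le:
  fixes F :: "(real \<times> real) set"
  assumes "\<delta> > 0" "F \<subseteq> {lo1..hi1} \<times> {lo2..hi2}" "lo1 \<le> hi1" "lo2 \<le> hi2"
  shows "finite (grid_cells \<delta> F)"
    and "real (grid_count \<delta> F) \<le> ((hi1 - lo1) / \<delta> + 2) * ((hi2 - lo2) / \<delta> + 2)"
proof -
  let ?I1 = "{\<lceil>lo1 / \<delta> - 1\<rceil>..\<lfloor>hi1 / \<delta>\<rfloor>}" and ?I2 = "{\<lceil>lo2 / \<delta> - 1\<rceil>..\<lfloor>hi2 / \<delta>\<rfloor>}"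
  let ?emb = "map_prod real_of_int real_of_int"
  have sub: "grid_cells \<delta> F \<subseteq> ?emb ` (?I1 \<times> ?I2)"
  proof
    fix k assume "k \<in> grid_cells \<delta> F"
    then obtain x where x: "fst k \<in> \<int>" "snd k \<in> \<int>" "x \<in> F"
      "\<delta> * fst k \<le> fst x" "fst x \<le> \<delta> * (fst k + 1)" "\<delta> * snd k \<le> snd x" "snd x \<le> \<delta> * (snd k + 1)"
      by (auto simp: grid_cells_def grid_cube_prod int_lattice_prod)
    obtain n1 n2 where n: "fst k = of_int n1" "snd k = of_int n2" using x(1,2) by (auto elim!: Ints_cases)
    have "n1 \<in> ?I1" "n2 \<in> ?I2"
      using x n assms(2) cell_index_mem[OF assms(1), of n1 "fst x"] cell_index_mem[OF assms(1), of n2 "snd x"]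
      by (auto simp: mem_Times_iff)
    then show "k \<in> ?emb ` (?I1 \<times> ?I2)" using n by (auto intro!: image_eqI[of _ _ "(n1, n2)"] prod_eqI)
  qed
  have fin: "finite (?I1 \<times> ?I2)" by simp
  then show "finite (grid_cells \<delta> F)" using finite_subset[OF sub] by blast
  have "card (grid_cells \<delta> F) \<le> card (?I1 \<times> ?I2)"
    using card_image_le[OF fin, of ?emb] card_mono[OF _ sub] fin by force
  then have "real (grid_count \<delta> F) \<le> real (card ?I1) * real (card ?I2)"
    by (simp add: grid_count_eq_card_grid_cells card_cartesian_product flip: of_nat_mult)
  also have "\<dots> \<le> (hi1 / \<delta> - (lo1 / \<delta> - 1) + 1) * (hi2 / \<delta> - (lo2 / \<delta> - 1) + 1)"
    using divide_right_mono[OF assms(3), of \<delta>] divide_right_mono[OF assms(4), of \<delta>] assms(1)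
    by (intro mult_mono card_ceiling_floor_le) auto
  finally show "real (grid_count \<delta> F) \<le> ((hi1 - lo1) / \<delta> + 2) * ((hi2 - lo2) / \<delta> + 2)"
    by (simp add: diff_divide_distrib add.commute)
qed

lemma grid_count_UN_intervals_le:
  fixes c :: "'i \<Rightarrow> real"
  assumes "\<delta> > 0" "finite I" "0 \<le> l" "F \<subseteq> (\<Union>j\<in>I. {c j..c j + l})"
  shows "real (grid_count \<delta> F) \<le> real (card I) * (l / \<delta> + 2)"
proof -
  have "finite (grid_cells \<delta> (\<Union>j\<in>I. {c j..c j + l}))"
    using grid_count_interval_le(1)[OF assms(1) order.refl] assms(2,3) by (simp add: grid_cells_UN)
  then have "real (grid_count \<delta> F) \<le> (\<Sum>j\<in>I. real (grid_count \<delta> {c j..c j + l})) + real (grid_count \<delta> ({} :: real set))"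
    using grid_count_cover_le[of I F "\<lambda>j. {c j..c j + l}" "{}" \<delta>] assms(2,4) by simp
  also have "\<dots> \<le> (\<Sum>j\<in>I. l / \<delta> + 2)"
  proof -
    have "real (grid_count \<delta> {c j..c j + l}) \<le> l / \<delta> + 2" for j
      using grid_count_interval_le(2)[OF assms(1) order.refl, of "c j" "c j + l"] assms(3) by simp
    then have "(\<Sum>j\<in>I. real (grid_count \<delta> {c j..c j + l})) \<le> (\<Sum>j\<in>I. l / \<delta> + 2)"
      by (rule sum_mono)
    moreover have "grid_count \<delta> ({} :: real set) = 0" by (simp add: grid_count_def)
    ultimately show ?thesis by simp
  qed
  finally show ?thesis by simp
qed

lemma grid_count_finite_le_real:
  fixes B :: "real set"
  assumes "\<delta> > 0" "finite B"
  shows "grid_count \<delta> B \<le> 2 * card B"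
proof -
  have "grid_count \<delta> (\<Union>x\<in>B. {x}) \<le> (\<Sum>x\<in>B. grid_count \<delta> {x})" by (rule grid_count_UN_le[OF assms(2)])
  also have "\<dots> \<le> (\<Sum>x\<in>B. 2)"
  proof (rule sum_mono)
    fix x :: real
    have "real (grid_count \<delta> {x}) \<le> (x - x) / \<delta> + 2"
      by (rule grid_count_interval_le(2)[OF assms(1)]) simp_all
    then show "grid_count \<delta> {x} \<le> 2" by simp
  qed
  finally show ?thesis by simp
qed

lemma grid_count_finite_le_prod:
  fixes B :: "(real \<times> real) set"
  assumes "\<delta> > 0" "finite B"
  shows "grid_count \<delta> B \<le> 4 * card B"
proof -
  have "grid_count \<delta> (\<Union>x\<in>B. {x}) \<le> (\<Sum>x\<in>B. grid_count \<delta> {x})" by (rule grid_count_UN_le[OF assms(2)])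
  also have "\<dots> \<le> (\<Sum>x\<in>B. 4)"
  proof (rule sum_mono)
    fix x :: "real \<times> real"
    have "real (grid_count \<delta> {x}) \<le> ((fst x - fst x) / \<delta> + 2) * ((snd x - snd x) / \<delta> + 2)"
      by (rule grid_count_rectangle_le(2)[OF assms(1)]) (auto simp: mem_Times_iff)
    then show "grid_count \<delta> {x} \<le> 4" by simp
  qed
  finally show ?thesis by simp
qed

section \<open>Upper box dimension from counting estimates\<close>

lemma Limsup_compose_le:
  fixes R :: "'a \<Rightarrow> 'b::complete_linorder"
  assumes "filterlim s G F"
  shows "Limsup F (\<lambda>k. R (s k)) \<le> Limsup G R"
proof (rule Limsup_greatest)
  fix P assume "eventually P G"
  then have "eventually (\<lambda>k. P (s k)) F" using assms by (simp add: filterlim_iff)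
  then have "eventually (\<lambda>k. R (s k) \<le> (SUP x\<in>Collect P. R x)) F"
    by (rule eventually_mono) (auto intro: SUP_upper)
  then show "Limsup F (\<lambda>k. R (s k)) \<le> (SUP x\<in>Collect P. R x)" by (rule Limsup_bounded)
qed

lemma upper_box_dim_ge_limit:
  fixes F :: "'a::euclidean_space set" and p q :: "nat \<Rightarrow> real"
  assumes q: "filterlim q at_top sequentially" and pq: "(\<lambda>k. p k / q k) \<longlonglongrightarrow> c"
    and N: "\<And>k. k \<ge> K \<Longrightarrow> 2 powr p k \<le> real (grid_count (2 powr (- q k)) F)"
  shows "ereal c \<le> upper_box_dim F"
proof -
  define R where "R = (\<lambda>\<delta>::real. ereal (ln (real (grid_count \<delta> F)) / - ln \<delta>))"
  define s where "s = (\<lambda>k. (2::real) powr (- q k))"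
  have "((\<lambda>x::real. 2 powr (-x)) \<longlongrightarrow> 0) at_top" by real_asymp
  then have "(s \<longlongrightarrow> 0) sequentially" unfolding s_def using q by (rule filterlim_compose)
  then have s0: "filterlim s (at_right 0) sequentially"
    by (rule tendsto_imp_filterlim_at_right) (simp add: s_def)
  have "eventually (\<lambda>k. q k > 0 \<and> k \<ge> K) sequentially"
    using filterlim_at_top_dense[THEN iffD1, OF q] eventually_ge_at_top[of K] by (auto intro: eventually_conj)
  then have ev: "eventually (\<lambda>k. ereal (p k / q k) \<le> R (s k)) sequentially"
  proof (rule eventually_mono)
    fix k assume k: "q k > 0 \<and> k \<ge> K"
    have "ln (2 powr p k) \<le> ln (real (grid_count (s k) F))"
      using N[of k] k by (intro ln_mono) (simp_all add: s_def)
    then have "p k * ln 2 / (q k * ln 2) \<le> ln (real (grid_count (s k) F)) / (q k * ln 2)"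
      using k by (intro divide_right_mono) (simp_all add: ln_powr)
    moreover have "- ln (s k) = q k * ln 2" by (simp add: s_def ln_powr)
    ultimately show "ereal (p k / q k) \<le> R (s k)" unfolding R_def by simp
  qed
  have "ereal c = Limsup sequentially (\<lambda>k. ereal (p k / q k))"
    by (rule lim_imp_Limsup[symmetric]) (use pq in auto)
  also have "\<dots> \<le> Limsup sequentially (\<lambda>k. R (s k))" by (rule Limsup_mono[OF ev])
  also have "\<dots> \<le> Limsup (at_right 0) R" by (rule Limsup_compose_le[OF s0])
  finally show ?thesis by (simp add: upper_box_dim_def R_def)
qed

lemma ln_ratio_le_if_bounded:
  fixes N C c \<delta> :: real
  assumes "0 < \<delta>" "\<delta> < 1" "0 < C" "0 < N" "N \<le> C * ln (1/\<delta>) * \<delta> powr (- c)"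
  shows "ln N / - ln \<delta> \<le> c + (ln C + ln (ln (1/\<delta>))) / - ln \<delta>"
proof -
  have pos: "- ln \<delta> > 0" and ln_inv: "ln (1/\<delta>) = - ln \<delta>" using assms(1,2) by (simp_all add: ln_div)
  have ln_ln: "0 < ln (1/\<delta>)" using pos ln_inv by simp
  have "ln N \<le> ln (C * ln (1/\<delta>) * \<delta> powr (- c))" using assms(4,5) by (rule ln_mono[rotated])
  also have "\<dots> = ln C + ln (ln (1/\<delta>)) + c * (- ln \<delta>)"
    using assms(1,3) ln_ln by (simp only: ln_mult ln_powr) simp
  finally have "ln N / - ln \<delta> \<le> (ln C + ln (ln (1/\<delta>)) + c * (- ln \<delta>)) / - ln \<delta>"
    using pos by (intro divide_right_mono) simp_all
  also have "\<dots> = c + (ln C + ln (ln (1/\<delta>))) / - ln \<delta>"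
    using pos by (simp add: field_simps)
  finally show ?thesis .
qed

lemma upper_box_dim_le_powr:
  fixes F :: "'a::euclidean_space set"
  assumes "c \<ge> 0" "C > 0" "r > 0"
    and bound: "\<And>\<delta>. 0 < \<delta> \<Longrightarrow> \<delta> < r \<Longrightarrow> real (grid_count \<delta> F) \<le> C * ln (1/\<delta>) * \<delta> powr (- c)"
  shows "upper_box_dim F \<le> ereal c"
proof (rule ereal_le_epsilon2)
  fix e :: real assume "e > 0"
  have "((\<lambda>\<delta>::real. (ln C + ln (ln (1/\<delta>))) / - ln \<delta>) \<longlongrightarrow> 0) (at_right 0)" by real_asymp
  then have "eventually (\<lambda>\<delta>. (ln C + ln (ln (1/\<delta>))) / - ln \<delta> < e) (at_right (0::real))"
    using \<open>e > 0\<close> by (rule order_tendstoD(2))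
  moreover have "eventually (\<lambda>\<delta>. 0 < \<delta> \<and> \<delta> < min r 1) (at_right (0::real))"
    unfolding eventually_at_right_field using assms(3) by (intro exI[of _ "min r 1"]) auto
  ultimately have "eventually (\<lambda>\<delta>. ereal (ln (real (grid_count \<delta> F)) / - ln \<delta>) \<le> ereal (c + e)) (at_right 0)"
  proof eventually_elim
    case (elim \<delta>)
    show ?case
    proof (cases "grid_count \<delta> F = 0")
      case False
      then show ?thesis
        using ln_ratio_le_if_bounded[of \<delta> C "real (grid_count \<delta> F)" c] bound[of \<delta>] elim assms(2) by simp
    qed (use assms(1) \<open>e > 0\<close> in simp)
  qed
  then have "upper_box_dim F \<le> ereal (c + e)" unfolding upper_box_dim_def by (rule Limsup_bounded)
  then show "upper_box_dim F \<le> ereal c + ereal e" by simp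
qed

section \<open>Sparse subsets of the unit interval\<close>

lemma not_islimpt_sparse:
  fixes S :: "real set"
  assumes fin: "\<And>t. t > 0 \<Longrightarrow> finite (S \<inter> {t..})" and "x > 0"
  shows "\<not> x islimpt S"
proof
  assume "x islimpt S"
  moreover have "S \<subseteq> (S \<inter> {x/2..}) \<union> {..x/2}" by auto
  ultimately have "x islimpt (S \<inter> {x/2..}) \<or> x islimpt {..x/2}"
    using islimpt_subset islimpt_Un by metis
  moreover have "\<not> x islimpt (S \<inter> {x/2..})" using fin[of "x/2"] \<open>x > 0\<close> islimpt_finite by auto
  moreover have "\<not> x islimpt {..x/2}" using closed_limpt[of "{..x/2}"] \<open>x > 0\<close> by auto
  ultimately show False by blast
qed

lemma compact_sparse:
  fixes S :: "real set"
  assumes "S \<subseteq> {0..1}" "0 \<in> S" and fin: "\<And>t. t > 0 \<Longrightarrow> finite (S \<inter> {t..})"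
  shows "compact S"
proof (subst compact_eq_bounded_closed, intro conjI)
  show "bounded S" using assms(1) bounded_subset[of "{0..1::real}" S] by simp
  show "closed S" unfolding closed_limpt
  proof (intro allI impI)
    fix x assume x: "x islimpt S"
    then have "x islimpt {0..1}" using assms(1) islimpt_subset by blast
    then have "0 \<le> x" using closed_limpt[of "{0..1::real}"] by auto
    then show "x \<in> S" using not_islimpt_sparse[OF fin, of x] x assms(2) by force
  qed
qed

section \<open>The construction\<close>

locale sawtooth_example =
  fixes a b :: real
  assumes a_pos: "0 < a" and a_le_1: "a \<le> 1" and two_a_le_b: "2 * a \<le> b" and one_le_b: "1 \<le> b"
    and b_le: "b \<le> a + 1"
begin

text \<open>The exponents make
  \<open>ncols k * colsize k\<close> comparable to \<open>2^(b k^2)\<close>, hence to \<open>spacing k^(-a)\<close> and to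
  \<open>gap k^(-b)\<close>, and keep a column shorter than \<open>gap k / 4\<close>. Since
  \<open>start k \<ge> 2 * ncols k * gap k\<close>, the block lies in \<open>[start k, 2 * start k)\<close>, and
  \<open>start (Suc k) \<le> start k / 2\<close> keeps the blocks disjoint.\<close>

definition gap :: "nat \<Rightarrow> real" where "gap k = 2 powr (- ((real k)^2))"
definition spacing :: "nat \<Rightarrow> real" where "spacing k = 2 powr (- (b * (real k)^2 + 2 * real k + 2) / a)"
definition ncols :: "nat \<Rightarrow> nat" where "ncols k = nat \<lceil>2 powr ((b - 1) * (real k)^2 - real k)\<rceil>"
definition colsize :: "nat \<Rightarrow> nat" where "colsize k = 2 ^ (k^2 - k)"
definition start :: "nat \<Rightarrow> real" where
  "start k = 2 * (2 powr ((b - 2) * (real k)^2 - real k) + 2 powr (- ((real k)^2)))"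

lemma colsize_eq_powr: "real (colsize k) = 2 powr ((real k)^2 - real k)"
proof -
  have "real (k^2 - k) = (real k)^2 - real k" by (simp add: of_nat_diff power2_eq_square)
  then show ?thesis unfolding colsize_def by (metis of_nat_numeral of_nat_power powr_realpow zero_less_numeral)
qed

lemma colsize_ge_1: "colsize k \<ge> 1"
  by (simp add: colsize_def)

lemma ncols_ge: "2 powr ((b - 1) * (real k)^2 - real k) \<le> real (ncols k)"
  and ncols_le: "real (ncols k) \<le> 2 powr ((b - 1) * (real k)^2 - real k) + 1"
  unfolding ncols_def by (linarith, simp add: of_nat_nat)

lemma ncols_le_powr: "real (ncols k) \<le> 2 * 2 powr ((b - 1) * (real k)^2)"
proof -
  have "2 powr ((b - 1) * (real k)^2 - real k) \<le> 2 powr ((b - 1) * (real k)^2)" by (rule two_powr_mono) simp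
  moreover have "1 \<le> 2 powr ((b - 1) * (real k)^2)" using one_le_b by (intro ge_one_powr_ge_zero) simp_all
  ultimately show ?thesis using ncols_le[of k] by linarith
qed

lemma ncols_le_powr_a: "real (ncols k) \<le> 2 * 2 powr (a * (real k)^2)"
proof -
  have "(b - 1) * (real k)^2 \<le> a * (real k)^2" using b_le by (intro mult_right_mono) auto
  then have "2 powr ((b - 1) * (real k)^2) \<le> 2 powr (a * (real k)^2)" by (rule two_powr_mono)
  then show ?thesis using ncols_le_powr[of k] by linarith
qed

lemma colsize_mult_spacing_le: "real (colsize k) * spacing k \<le> gap k / 4"
proof -
  let ?s = "real k"
  have "b * ?s^2 \<ge> 2 * a * ?s^2" using two_a_le_b by (intro mult_right_mono) auto
  then have "(b * ?s^2 + 2 * ?s + 2) / a \<ge> (2 * a * ?s^2 + 2 * a * ?s + 2 * a) / a"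
    using a_pos a_le_1 by (intro divide_right_mono) (auto intro!: add_mono mult_right_mono)
  also have "(2 * a * ?s^2 + 2 * a * ?s + 2 * a) / a = 2 * ?s^2 + 2 * ?s + 2" using a_pos by (simp add: field_simps)
  finally have ex: "?s^2 - ?s - (b * ?s^2 + 2 * ?s + 2) / a \<le> - (?s^2) - 2" by simp
  have eqe: "(?s^2 - ?s) + (- (b * ?s^2 + 2 * ?s + 2) / a) = ?s^2 - ?s - (b * ?s^2 + 2 * ?s + 2) / a"
    by (simp add: minus_divide_left)
  have "real (colsize k) * spacing k = 2 powr (?s^2 - ?s - (b * ?s^2 + 2 * ?s + 2) / a)"
    unfolding colsize_eq_powr spacing_def powr_add[symmetric] eqe ..
  also have "\<dots> \<le> 2 powr (- (?s^2) - 2)" by (rule two_powr_mono[OF ex])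
  also have "\<dots> = gap k / 4" by (simp add: gap_def powr_diff)
  finally show ?thesis .
qed

lemma gap_pos: "gap k > 0" by (simp add: gap_def)
lemma spacing_pos: "spacing k > 0" by (simp add: spacing_def)
lemma start_pos: "start k > 0" unfolding start_def by (intro mult_pos_pos add_pos_pos) auto
lemma gap_le_1: "gap k \<le> 1"
proof -
  have "gap k \<le> 2 powr 0" unfolding gap_def by (rule two_powr_mono) simp
  then show ?thesis by simp
qed

lemma gap_powr: "gap k powr t = 2 powr (- ((real k)^2) * t)"
  unfolding gap_def by (simp add: powr_powr)

lemma spacing_powr_neg_a: "spacing k powr (- a) = 2 powr (b * (real k)^2 + 2 * real k + 2)"
proof -
  have "spacing k powr (- a) = 2 powr ((- (b * (real k)^2 + 2 * real k + 2) / a) * (- a))"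
    unfolding spacing_def by (rule powr_powr)
  also have "(- (b * (real k)^2 + 2 * real k + 2) / a) * (- a) = b * (real k)^2 + 2 * real k + 2"
    using a_pos by (simp add: field_simps)
  finally show ?thesis .
qed

lemma ncols_mult_colsize_le: "real (ncols k) * real (colsize k) \<le> 2 * 2 powr (b * (real k)^2 - real k)"
proof -
  have "real (ncols k) * real (colsize k) \<le> (2 * 2 powr ((b - 1) * (real k)^2)) * real (colsize k)"
    by (rule mult_right_mono[OF ncols_le_powr]) simp
  also have "\<dots> = (2 * 2 powr ((b - 1) * (real k)^2)) * 2 powr ((real k)^2 - real k)" by (simp add: colsize_eq_powr)
  also have "\<dots> = 2 * 2 powr ((b - 1) * (real k)^2 + ((real k)^2 - real k))" by (simp add: powr_add)
  also have "(b - 1) * (real k)^2 + ((real k)^2 - real k) = b * (real k)^2 - real k" by (simp add: algebra_simps)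
  finally show ?thesis .
qed

lemma ncols_mult_colsize_le_spacing: "real (ncols k) * real (colsize k) \<le> spacing k powr (- a)"
proof -
  have "2 * 2 powr (b * (real k)^2 - real k) = 2 powr (b * (real k)^2 - real k + 1)" by (simp add: powr_add)
  also have "\<dots> \<le> 2 powr (b * (real k)^2 + 2 * real k + 2)" by (rule two_powr_mono) simp
  finally show ?thesis using ncols_mult_colsize_le[of k] spacing_powr_neg_a[of k] by linarith
qed

lemma ncols_mult_colsize_le_gap: "real (ncols k) * real (colsize k) \<le> 2 * gap k powr (- b)"
proof -
  have "2 powr (b * (real k)^2 - real k) \<le> 2 powr (- ((real k)^2) * (- b))" by (rule two_powr_mono) simp
  then show ?thesis using ncols_mult_colsize_le[of k] unfolding gap_powr by linarith
qed

lemma ncols_mult_colsize_ge: "2 powr (b * (real k)^2 - 2 * real k) \<le> real (ncols k) * real (colsize k)"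
proof -
  have "2 powr ((b - 1) * (real k)^2 - real k) * real (colsize k) = 2 powr (b * (real k)^2 - 2 * real k)"
    unfolding colsize_eq_powr by (rule two_powr_add_eq) (simp add: algebra_simps)
  moreover have "2 powr ((b - 1) * (real k)^2 - real k) * real (colsize k) \<le> real (ncols k) * real (colsize k)" by (rule mult_right_mono[OF ncols_ge]) simp
  ultimately show ?thesis by simp
qed

lemma block_width_le_start: "real (ncols k) * gap k \<le> start k / 2"
proof -
  have "real (ncols k) * gap k \<le> (2 powr ((b - 1) * (real k)^2 - real k) + 1) * gap k"
    by (rule mult_right_mono[OF ncols_le]) (simp add: gap_def)
  moreover have "2 powr ((b - 1) * (real k)^2 - real k) * gap k = 2 powr ((b - 2) * (real k)^2 - real k)"
    unfolding gap_def by (rule two_powr_add_eq) (simp add: algebra_simps)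
  ultimately show ?thesis by (simp add: start_def gap_def distrib_right)
qed

lemma block_width_le_a: "real (ncols k) * gap k \<le> 2 * gap k powr (1 - a)"
proof -
  have "real (ncols k) * gap k \<le> (2 * 2 powr (a * (real k)^2)) * gap k" by (rule mult_right_mono[OF ncols_le_powr_a]) (simp add: gap_def)
  moreover have "2 powr (a * (real k)^2) * gap k = gap k powr (1 - a)"
    unfolding gap_powr unfolding gap_def by (rule two_powr_add_eq) (simp add: algebra_simps)
  ultimately show ?thesis by simp
qed

lemma block_width_le_b: "real (ncols k) * gap k \<le> 2 * gap k powr (2 - b)"
proof -
  have "real (ncols k) * gap k \<le> (2 * 2 powr ((b - 1) * (real k)^2)) * gap k" by (rule mult_right_mono[OF ncols_le_powr]) (simp add: gap_def)
  moreover have "2 powr ((b - 1) * (real k)^2) * gap k = gap k powr (2 - b)"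
    unfolding gap_powr unfolding gap_def by (rule two_powr_add_eq) (simp add: algebra_simps)
  ultimately show ?thesis by simp
qed

lemma start_Suc_le: "start (Suc k) \<le> start k / 2"
proof -
  let ?s = "real k"
  have "(b - 2) * (?s + 1)^2 \<le> (b - 2) * ?s^2"
    using b_le a_le_1 by (intro mult_left_mono_neg) (auto simp: power2_eq_square intro!: mult_mono)
  then have "2 powr ((b - 2) * (?s + 1)^2 - (?s + 1)) \<le> 2 powr ((b - 2) * ?s^2 - ?s - 1)" by (intro two_powr_mono) simp
  moreover have "2 powr (- ((?s + 1)^2)) \<le> 2 powr (- (?s^2) - 1)" by (intro two_powr_mono) (simp add: power2_eq_square algebra_simps)
  ultimately show ?thesis unfolding start_def by (simp add: powr_diff add.commute)
qed

lemma start_antimono: "k \<le> k' \<Longrightarrow> start k' \<le> start k"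
proof (induction k' rule: dec_induct)
  case (step n) then show ?case using start_Suc_le[of n] start_pos[of n] by linarith
qed simp

lemma start_less_le: "k < k' \<Longrightarrow> 2 * start k' \<le> start k"
  using start_Suc_le[of k] start_antimono[of "Suc k" k'] by simp

lemma start_le_two_powr: "start k \<le> 4 * 2 powr (- real k)"
proof -
  have "(b - 2) * (real k)^2 \<le> 0" using b_le a_le_1 by (intro mult_nonpos_nonneg) auto
  then have "2 powr ((b - 2) * (real k)^2 - real k) \<le> 2 powr (- real k)"
    by (intro two_powr_mono) auto
  moreover have "2 powr (- ((real k)^2)) \<le> 2 powr (- real k)" using real_le_square[of k] by (intro two_powr_mono) simp
  ultimately show ?thesis unfolding start_def by (smt (verit))
qed

lemma start_le_gap_powr: "start k \<le> 4 * gap k powr (2 - b)"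
proof -
  have "2 powr ((b - 2) * (real k)^2 - real k) \<le> 2 powr (- ((real k)^2) * (2 - b))"
    by (intro two_powr_mono) (simp add: algebra_simps)
  moreover have "(real k)^2 * 1 \<le> (real k)^2 * b" using one_le_b by (intro mult_left_mono) auto
  then have "2 powr (- ((real k)^2)) \<le> 2 powr (- ((real k)^2) * (2 - b))"
    by (intro two_powr_mono) (auto simp: algebra_simps)
  ultimately show ?thesis unfolding start_def gap_powr by (smt (verit))
qed

definition point :: "nat \<Rightarrow> nat \<Rightarrow> nat \<Rightarrow> real" where "point k j i = start k + real j * gap k + real i * spacing k"
definition block :: "nat \<Rightarrow> real set" where "block k = (\<lambda>(j,i). point k j i) ` ({..<ncols k} \<times> {..<colsize k})"
definition X :: "real set" where "X = insert 0 (\<Union>k\<in>{3..}. block k)"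

lemma index_spacing_le: "i < colsize k \<Longrightarrow> real i * spacing k \<le> gap k / 4"
proof -
  assume "i < colsize k"
  then have "real i * spacing k \<le> real (colsize k) * spacing k" using spacing_pos[of k] by (intro mult_right_mono) auto
  then show ?thesis using colsize_mult_spacing_le[of k] by linarith
qed

lemma spacing_le: "spacing k \<le> gap k / 4"
proof -
  have "1 * spacing k \<le> real (colsize k) * spacing k" using colsize_ge_1[of k] spacing_pos[of k] by (intro mult_right_mono) auto
  then show ?thesis using colsize_mult_spacing_le[of k] by linarith
qed

lemma point_ge: "start k + real j * gap k \<le> point k j i"
  unfolding point_def using spacing_pos[of k] by simp

lemma point_le: "i < colsize k \<Longrightarrow> point k j i \<le> start k + real j * gap k + gap k / 4"
  unfolding point_def using index_spacing_le by simp

lemma point_in_column: "i < colsize k \<Longrightarrow> point k j i \<in> {start k + real j * gap k .. start k + real j * gap k + real (colsize k) * spacing k}"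
proof -
  assume i: "i < colsize k"
  then have "real i * spacing k \<le> real (colsize k) * spacing k" using spacing_pos[of k] by (intro mult_right_mono) auto
  then show ?thesis using point_ge[of k j i] by (simp add: point_def)
qed

lemma point_range: assumes "j < ncols k" "i < colsize k" shows "start k \<le> point k j i" "point k j i < 2 * start k"
proof -
  have "0 \<le> real j * gap k" using gap_pos[of k] by simp
  then show "start k \<le> point k j i" using point_ge[of k j i] by linarith
  have "real j + 1 \<le> real (ncols k)" using assms by linarith
  then have "(real j + 1) * gap k \<le> real (ncols k) * gap k" using gap_pos[of k] by (intro mult_right_mono) auto
  then have "real j * gap k + gap k / 4 < real (ncols k) * gap k" using gap_pos[of k] by (simp add: algebra_simps)
  then show "point k j i < 2 * start k" using point_le[OF assms(2), of j] block_width_le_start[of k] start_pos[of k] by linarith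
qed

lemma point_sep_columns:
  assumes "j < ncols k" "i < colsize k" "j' < ncols k" "i' < colsize k" "j \<noteq> j'"
  shows "3 * gap k / 4 \<le> \<bar>point k j i - point k j' i'\<bar>"
proof -
  { fix j i j' i' :: nat assume a: "i < colsize k" "i' < colsize k" "j < j'"
    have "real j + 1 \<le> real j'" using a by linarith
    then have "(real j + 1) * gap k \<le> real j' * gap k" using gap_pos[of k] by (intro mult_right_mono) auto
    then have "point k j i + 3 * gap k / 4 \<le> point k j' i'"
      using point_le[OF a(1), of j] point_ge[of k j' i'] by (simp add: algebra_simps)
    then have "3 * gap k / 4 \<le> \<bar>point k j i - point k j' i'\<bar>" by linarith }
  note * = this
  show ?thesis
  proof (cases "j < j'")
    case True then show ?thesis using *[OF assms(2,4)] by blast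
  next
    case False then have "j' < j" using assms(5) by linarith
    then show ?thesis using *[OF assms(4,2), of j' j] by (simp add: abs_minus_commute)
  qed
qed

lemma point_sep_spacing:
  assumes "j < ncols k" "i < colsize k" "j' < ncols k" "i' < colsize k" "(j, i) \<noteq> (j', i')"
  shows "spacing k \<le> \<bar>point k j i - point k j' i'\<bar>"
proof (cases "j = j'")
  case True
  then have "i \<noteq> i'" using assms by auto
  then have "1 \<le> \<bar>real i - real i'\<bar>" by linarith
  then have "1 * spacing k \<le> \<bar>real i - real i'\<bar> * spacing k" using spacing_pos[of k] by (intro mult_right_mono) auto
  also have "\<dots> = \<bar>point k j i - point k j' i'\<bar>" using True spacing_pos[of k]
    by (simp add: point_def abs_mult left_diff_distrib[symmetric])
  finally show ?thesis by simp
next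
  case False
  then show ?thesis using point_sep_columns[OF assms(1-4) False] spacing_le[of k] gap_pos[of k] by linarith
qed

lemma inj_on_point: "inj_on (\<lambda>(j,i). point k j i) ({..<ncols k} \<times> {..<colsize k})"
proof (rule inj_onI)
  fix p q assume "p \<in> {..<ncols k} \<times> {..<colsize k}" "q \<in> {..<ncols k} \<times> {..<colsize k}"
      "(\<lambda>(j,i). point k j i) p = (\<lambda>(j,i). point k j i) q"
  then show "p = q" using point_sep_spacing[of "fst p" k "snd p" "fst q" "snd q"] spacing_pos[of k]
    by (cases p, cases q) (auto)
qed

lemma card_block: "card (block k) = ncols k * colsize k"
  unfolding block_def by (simp add: card_image[OF inj_on_point] card_cartesian_product)

lemma finite_block: "finite (block k)" by (simp add: block_def)

lemma block_range: "x \<in> block k \<Longrightarrow> start k \<le> x \<and> x < 2 * start k"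
  unfolding block_def using point_range by auto

lemma start_le_half: "k \<ge> 3 \<Longrightarrow> 2 * start k \<le> 1"
proof -
  assume "k \<ge> 3"
  then have "start k \<le> start 3" by (rule start_antimono)
  also have "\<dots> \<le> 4 * 2 powr (- real (3::nat))" by (rule start_le_two_powr)
  also have "\<dots> = 1/2" by (simp add: powr_minus)
  finally show ?thesis by simp
qed

lemma block_subset_unit: "k \<ge> 3 \<Longrightarrow> block k \<subseteq> {0..1}"
  using block_range start_le_half start_pos by fastforce

lemma X_subset_unit: "X \<subseteq> {0..1}" unfolding X_def using block_subset_unit by auto

lemma block_unique: "x \<in> block k \<Longrightarrow> x \<in> block k' \<Longrightarrow> k = k'"
proof (rule ccontr)
  assume x: "x \<in> block k" "x \<in> block k'" and ne: "k \<noteq> k'"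
  { fix k k' assume "x \<in> block k" "x \<in> block k'" "k < k'"
    then have False using block_range[of x k] block_range[of x k'] start_less_le[of k k'] by linarith }
  then show False using x ne by (metis linorder_neqE_nat)
qed

lemma finite_X_Int_atLeast: "t > 0 \<Longrightarrow> finite (X \<inter> {t..})"
proof -
  assume t: "t > 0"
  have "X \<inter> {t..} \<subseteq> insert 0 (\<Union>k\<in>{..nat \<lceil>8/t\<rceil>}. block k)"
  proof
    fix x assume x: "x \<in> X \<inter> {t..}"
    show "x \<in> insert 0 (\<Union>k\<in>{..nat \<lceil>8/t\<rceil>}. block k)"
    proof (cases "x = 0")
      case False
      then obtain k where k: "x \<in> block k" using x by (auto simp: X_def)
      have "t < 2 * start k" using block_range[OF k] x by auto
      also have "\<dots> \<le> 8 * 2 powr (- real k)" using start_le_two_powr[of k] by simp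
      finally have "t * 2 powr real k < 8" by (simp add: powr_minus field_simps)
      then have "t * real k < 8" using real_le_two_powr[of k] t
        by (meson le_less_trans mult_left_mono less_imp_le)
      then have "real k < 8 / t" using t by (simp add: field_simps)
      then have "k \<le> nat \<lceil>8/t\<rceil>" by linarith
      then show ?thesis using k by auto
    qed simp
  qed
  then show ?thesis by (rule finite_subset) (simp add: finite_block)
qed

lemma compact_X: "compact X"
  by (rule compact_sparse[OF X_subset_unit _ finite_X_Int_atLeast]) (simp add: X_def)

definition saw :: "real \<Rightarrow> real" where
  "saw x = (if \<exists>k. x \<in> block k then
     (let k = (THE k. x \<in> block k) in gap k ^ 2 / spacing k * frac ((x - start k) / gap k)) else 0)"

lemma saw_point: assumes "j < ncols k" "i < colsize k" shows "saw (point k j i) = real i * gap k"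
proof -
  have mem: "point k j i \<in> block k" using assms by (auto simp: block_def)
  have the: "(THE k'. point k j i \<in> block k') = k" using mem block_unique by blast
  have fr: "frac ((point k j i - start k) / gap k) = real i * spacing k / gap k"
  proof (subst frac_unique_iff, intro conjI)
    have "(point k j i - start k) / gap k - real i * spacing k / gap k = real j"
      using gap_pos[of k] by (simp add: point_def field_simps)
    then show "(point k j i - start k) / gap k - real i * spacing k / gap k \<in> \<int>" by simp
    show "0 \<le> real i * spacing k / gap k" using gap_pos[of k] spacing_pos[of k] by simp
    have "real i * spacing k \<le> gap k / 4" by (rule index_spacing_le[OF assms(2)])
    then show "real i * spacing k / gap k < 1" using gap_pos[of k] by (simp add: field_simps)
  qed
  have "saw (point k j i) = gap k ^ 2 / spacing k * frac ((point k j i - start k) / gap k)"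
    using mem unfolding saw_def the by (simp add: Let_def the exI[of _ k])
  also have "\<dots> = gap k ^ 2 / spacing k * (real i * spacing k / gap k)" by (simp only: fr)
  also have "\<dots> = real i * gap k" using gap_pos[of k] spacing_pos[of k] by (simp add: power2_eq_square field_simps)
  finally show ?thesis .
qed

lemma saw_block_bounds: assumes "x \<in> block k" shows "0 \<le> saw x" "saw x \<le> 2 powr (- real k)"
proof -
  obtain j i where ji: "j < ncols k" "i < colsize k" "x = point k j i" using assms by (auto simp: block_def)
  have "real i * gap k \<le> real (colsize k) * gap k" using ji gap_pos[of k] by (intro mult_right_mono) auto
  also have "real (colsize k) * gap k = 2 powr (- real k)"
    unfolding colsize_eq_powr gap_def by (rule two_powr_add_eq) simp
  finally show "saw x \<le> 2 powr (- real k)" using saw_point[OF ji(1,2)] ji(3) by simp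
  show "0 \<le> saw x" using saw_point[OF ji(1,2)] ji(3) gap_pos[of k] by simp
qed

lemma zero_notin_block: "0 \<notin> block k" using block_range[of 0 k] start_pos[of k] by auto

lemma saw_zero: "saw 0 = 0" using zero_notin_block by (simp add: saw_def)

lemma saw_range: "x \<in> X \<Longrightarrow> 0 \<le> saw x \<and> saw x \<le> 1"
proof -
  assume "x \<in> X"
  then consider "x = 0" | k where "x \<in> block k" by (auto simp: X_def)
  then show ?thesis
  proof cases
    case 1 then show ?thesis by (simp add: saw_zero)
  next
    case 2
    have "2 powr (- real k) \<le> 2 powr 0" by (rule two_powr_mono) simp
    then show ?thesis using saw_block_bounds[OF 2] by simp
  qed
qed

lemma saw_small_near_zero:
  assumes "e > 0"
  obtains d where "d > 0" "\<And>x. x \<in> X \<Longrightarrow> x < d \<Longrightarrow> saw x < e"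
proof -
  obtain n where n: "(1/2) ^ n < e" using real_arch_pow_inv[OF assms, of "1/2"] by auto
  have "saw x < e" if x: "x \<in> X" "x < start n" for x
  proof (cases "x = 0")
    case False
    then obtain k where k: "x \<in> block k" using x(1) by (auto simp: X_def)
    then have "n < k" using x(2) block_range[OF k] start_antimono[of k n] by force
    then have "2 powr (- real k) \<le> 2 powr (- real n)" by (intro two_powr_mono) simp
    then have "saw x \<le> 2 powr (- real n)" using saw_block_bounds(2)[OF k] by linarith
    then show ?thesis using n by (simp add: powr_minus powr_realpow power_one_over inverse_eq_divide)
  qed (use assms in \<open>simp add: saw_zero\<close>)
  with start_pos that show ?thesis by blast
qed

lemma continuous_on_saw: "continuous_on X saw"
  unfolding continuous_on_eq_continuous_within
proof
  fix x assume x: "x \<in> X"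
  show "continuous (at x within X) saw"
  proof (cases "x = 0")
    case True
    show ?thesis unfolding continuous_within_eps_delta
    proof (intro allI impI)
      fix e :: real assume "e > 0"
      then obtain d where "d > 0" "\<And>x. x \<in> X \<Longrightarrow> x < d \<Longrightarrow> saw x < e"
        using saw_small_near_zero by blast
      then show "\<exists>d>0. \<forall>x'\<in>X. dist x' x < d \<longrightarrow> dist (saw x') (saw x) < e"
        using True saw_range by (force simp: saw_zero dist_real_def)
    qed
  next
    case False
    then have "x > 0" using x X_subset_unit by force
    then have "\<not> x islimpt X" by (rule not_islimpt_sparse[OF finite_X_Int_atLeast, rotated])
    then show ?thesis by (simp add: continuous_trivial_limit trivial_limit_within)
  qed
qed

lemma uniformly_continuous_on_saw: "uniformly_continuous_on X saw"
  by (rule compact_uniformly_continuous[OF continuous_on_saw compact_X])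

section \<open>Lower bounds\<close>

lemma block_subset_X: "k \<ge> 3 \<Longrightarrow> block k \<subseteq> X"
  by (auto simp: X_def)

lemma finite_grid_cells_X: "\<delta> > 0 \<Longrightarrow> finite (grid_cells \<delta> X)"
  using grid_count_interval_le(1)[of \<delta> X 0 1] X_subset_unit by simp

lemma block_separated:
  assumes "p \<in> block k" "q \<in> block k" "p \<noteq> q"
  shows "spacing k \<le> \<bar>p - q\<bar>"
proof -
  obtain j i j' i' where "j < ncols k" "i < colsize k" "j' < ncols k" "i' < colsize k"
    "p = point k j i" "q = point k j' i'"
    using assms(1,2) by (auto simp: block_def)
  then show ?thesis using point_sep_spacing[of j k i j' i'] assms(3) by force
qed

definition lifted_block :: "nat \<Rightarrow> (real \<times> real) set" where
  "lifted_block k = (\<lambda>(j,i). (point k j i, real i * gap k)) ` ({..<ncols k} \<times> {..<colsize k})"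

lemma lifted_block_subset_graph: "k \<ge> 3 \<Longrightarrow> lifted_block k \<subseteq> graph_of X saw"
  using block_subset_X saw_point by (fastforce simp: lifted_block_def block_def graph_of_def)

lemma card_lifted_block: "card (lifted_block k) = ncols k * colsize k"
proof -
  have "inj_on (\<lambda>(j,i). (point k j i, real i * gap k)) ({..<ncols k} \<times> {..<colsize k})"
    using inj_on_point[of k] by (auto simp: inj_on_def)
  then show ?thesis by (simp add: lifted_block_def card_image card_cartesian_product)
qed

lemma lifted_block_separated:
  assumes "p \<in> lifted_block k" "q \<in> lifted_block k" "p \<noteq> q"
  shows "gap k / 2 < \<bar>fst p - fst q\<bar> \<or> gap k / 2 < \<bar>snd p - snd q\<bar>"
proof -
  obtain j i j' i' where ji: "j < ncols k" "i < colsize k" "j' < ncols k" "i' < colsize k"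
    "p = (point k j i, real i * gap k)" "q = (point k j' i', real i' * gap k)"
    using assms(1,2) by (auto simp: lifted_block_def)
  show ?thesis
  proof (cases "j = j'")
    case False
    then show ?thesis using point_sep_columns[OF ji(1-4) False] gap_pos[of k] ji(5,6) by simp
  next
    case True
    then have "i \<noteq> i'" using assms(3) ji(5,6) by auto
    then have "1 \<le> \<bar>real i - real i'\<bar>" by linarith
    then have "1 * gap k \<le> \<bar>real i - real i'\<bar> * gap k" using gap_pos[of k] by (intro mult_right_mono) auto
    also have "\<dots> = \<bar>snd p - snd q\<bar>"
      using ji(5,6) gap_pos[of k] by (simp add: abs_mult flip: left_diff_distrib)
    finally show ?thesis using gap_pos[of k] by simp
  qed
qed

lemma upper_box_dim_X_ge: "ereal a \<le> upper_box_dim X"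
proof (rule upper_box_dim_ge_limit[where q = "\<lambda>k. (b * (real k)^2 + 2 * real k + 2) / a + 1"
      and p = "\<lambda>k. b * (real k)^2 - 2 * real k" and K = 3])
  show "filterlim (\<lambda>k::nat. (b * (real k)^2 + 2 * real k + 2) / a + 1) at_top sequentially"
    using a_pos one_le_b by real_asymp
  show "((\<lambda>k::nat. (b * (real k)^2 - 2 * real k) / ((b * (real k)^2 + 2 * real k + 2) / a + 1)) \<longlongrightarrow> a) sequentially"
    using a_pos one_le_b by real_asymp
  fix k :: nat assume k: "3 \<le> k"
  have "spacing k * 2 powr (- 1) = 2 powr (- ((b * (real k)^2 + 2 * real k + 2) / a + 1))"
    unfolding spacing_def by (rule two_powr_add_eq) (simp add: minus_divide_left)
  then have scale: "2 powr (- ((b * (real k)^2 + 2 * real k + 2) / a + 1)) = spacing k / 2"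
    by (simp add: powr_minus)
  have "card (block k) \<le> grid_count (spacing k / 2) X"
  proof (rule card_le_grid_count_if_separated_real)
    show "spacing k / 2 > 0" "finite (grid_cells (spacing k / 2) X)"
      using spacing_pos[of k] finite_grid_cells_X by simp_all
    show "finite (block k)" "block k \<subseteq> X" using finite_block block_subset_X[OF k] by simp_all
    show "spacing k / 2 < \<bar>p - q\<bar>" if "p \<in> block k" "q \<in> block k" "p \<noteq> q" for p q
      using block_separated[OF that] spacing_pos[of k] by linarith
  qed
  then have "real (ncols k) * real (colsize k) \<le> real (grid_count (spacing k / 2) X)"
    unfolding card_block by (metis of_nat_mono of_nat_mult)
  then show "2 powr (b * (real k)^2 - 2 * real k)
      \<le> real (grid_count (2 powr (- ((b * (real k)^2 + 2 * real k + 2) / a + 1))) X)"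
    using ncols_mult_colsize_ge[of k] unfolding scale by linarith
qed

lemma upper_box_dim_graph_saw_ge: "ereal b \<le> upper_box_dim (graph_of X saw)"
proof (rule upper_box_dim_ge_limit[where q = "\<lambda>k. (real k)^2 + 1"
      and p = "\<lambda>k. b * (real k)^2 - 2 * real k" and K = 3])
  show "filterlim (\<lambda>k::nat. (real k)^2 + 1) at_top sequentially" by real_asymp
  show "((\<lambda>k::nat. (b * (real k)^2 - 2 * real k) / ((real k)^2 + 1)) \<longlongrightarrow> b) sequentially"
    using one_le_b by real_asymp
  fix k :: nat assume k: "3 \<le> k"
  have "gap k * 2 powr (- 1) = 2 powr (- ((real k)^2 + 1))"
    unfolding gap_def by (rule two_powr_add_eq) simp
  then have scale: "2 powr (- ((real k)^2 + 1)) = gap k / 2" by (simp add: powr_minus)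
  have "graph_of X saw \<subseteq> {0..1} \<times> {0..1}"
    using X_subset_unit saw_range by (auto simp: graph_of_def)
  then have "finite (grid_cells (gap k / 2) (graph_of X saw))"
    using grid_count_rectangle_le(1) gap_pos[of k] by simp
  then have "card (lifted_block k) \<le> grid_count (gap k / 2) (graph_of X saw)"
  proof (rule card_le_grid_count_if_separated_prod[rotated 3])
    show "gap k / 2 > 0" using gap_pos[of k] by simp
    show "finite (lifted_block k)" by (simp add: lifted_block_def)
    show "lifted_block k \<subseteq> graph_of X saw" using k by (rule lifted_block_subset_graph)
  qed (rule lifted_block_separated)
  then have "real (ncols k) * real (colsize k) \<le> real (grid_count (gap k / 2) (graph_of X saw))"
    unfolding card_lifted_block by (metis of_nat_mono of_nat_mult)
  then show "2 powr (b * (real k)^2 - 2 * real k)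
      \<le> real (grid_count (2 powr (- ((real k)^2 + 1))) (graph_of X saw))"
    using ncols_mult_colsize_ge[of k] unfolding scale by linarith
qed

section \<open>Upper bounds\<close>

lemma block_subset_interval: "block k \<subseteq> {start k .. start k + real (ncols k) * gap k}"
proof
  fix x assume "x \<in> block k"
  then obtain j i where ji: "j < ncols k" "i < colsize k" "x = point k j i" by (auto simp: block_def)
  then have "(real j + 1) * gap k \<le> real (ncols k) * gap k"
    using gap_pos[of k] by (intro mult_right_mono) auto
  then show "x \<in> {start k .. start k + real (ncols k) * gap k}"
    using ji point_range(1)[OF ji(1,2)] point_le[OF ji(2), of j] gap_pos[of k] by (simp add: algebra_simps)
qed

lemma block_subset_columns:
  "block k \<subseteq> (\<Union>j\<in>{..<ncols k}. {start k + real j * gap k .. start k + real j * gap k + real (colsize k) * spacing k})"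
  using point_in_column by (auto simp: block_def)

lemma ncols_le_gap_powr: "real (ncols k) \<le> 2 * gap k powr (- a)"
  using ncols_le_powr_a[of k] by (simp add: gap_powr mult.commute)

lemma grid_count_block_le_coarse:
  assumes "0 < \<delta>" "gap k \<le> \<delta>"
  shows "real (grid_count \<delta> (block k)) \<le> 2 * \<delta> powr (- a) + 2"
proof -
  have "real (grid_count \<delta> (block k)) \<le> real (ncols k) * gap k / \<delta> + 2"
    using grid_count_interval_le(2)[OF assms(1) block_subset_interval] gap_pos[of k] by simp
  also have "real (ncols k) * gap k \<le> 2 * \<delta> powr (1 - a)"
    using block_width_le_a[of k] powr_mono2[of "1 - a" "gap k" \<delta>] assms(2) gap_pos[of k] a_le_1 by force
  then have "real (ncols k) * gap k / \<delta> \<le> 2 * \<delta> powr (- a)"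
    using assms(1) by (simp add: powr_one_minus divide_le_eq mult.commute mult.left_commute)
  finally show ?thesis by simp
qed

lemma grid_count_block_le_medium:
  assumes "spacing k \<le> \<delta>" "\<delta> < gap k"
  shows "real (grid_count \<delta> (block k)) \<le> 5 * \<delta> powr (- a)"
proof -
  have "\<delta> > 0" using assms(1) spacing_pos[of k] by linarith
  have "real (grid_count \<delta> (block k)) \<le> real (ncols k) * (real (colsize k) * spacing k / \<delta> + 2)"
    using grid_count_UN_intervals_le[OF \<open>\<delta> > 0\<close> _ _ block_subset_columns] spacing_pos[of k] by simp
  also have "\<dots> = real (ncols k) * real (colsize k) * spacing k / \<delta> + 2 * real (ncols k)"
    by (simp add: algebra_simps)
  also have "\<dots> \<le> \<delta> powr (- a) + 4 * \<delta> powr (- a)"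
  proof (rule add_mono)
    have "real (ncols k) * real (colsize k) * spacing k \<le> spacing k powr (- a) * spacing k"
      using ncols_mult_colsize_le_spacing[of k] spacing_pos[of k] by (intro mult_right_mono) auto
    also have "\<dots> = spacing k powr (1 - a)" using powr_one_minus[OF spacing_pos[of k], of a] by simp
    also have "\<dots> \<le> \<delta> powr (1 - a)" using assms(1) spacing_pos[of k] a_le_1 by (intro powr_mono2) auto
    finally show "real (ncols k) * real (colsize k) * spacing k / \<delta> \<le> \<delta> powr (- a)"
      using \<open>\<delta> > 0\<close> by (simp add: powr_one_minus divide_le_eq mult.commute)
    have "gap k powr (- a) \<le> \<delta> powr (- a)" using assms \<open>\<delta> > 0\<close> a_pos by (intro powr_mono2') auto
    then show "2 * real (ncols k) \<le> 4 * \<delta> powr (- a)" using ncols_le_gap_powr[of k] by linarith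
  qed
  finally show ?thesis by simp
qed

lemma grid_count_block_le_fine:
  assumes "0 < \<delta>" "\<delta> < spacing k"
  shows "real (grid_count \<delta> (block k)) \<le> 2 * \<delta> powr (- a)"
proof -
  have "grid_count \<delta> (block k) \<le> 2 * (ncols k * colsize k)"
    using grid_count_finite_le_real[OF assms(1) finite_block, of k] by (simp add: card_block)
  then have "real (grid_count \<delta> (block k)) \<le> real (2 * (ncols k * colsize k))" by (rule of_nat_mono)
  also have "\<dots> = 2 * (real (ncols k) * real (colsize k))" by simp
  also have "\<dots> \<le> 2 * spacing k powr (- a)" using ncols_mult_colsize_le_spacing[of k] by simp
  also have "\<dots> \<le> 2 * \<delta> powr (- a)" using assms a_pos by (simp add: powr_mono2')
  finally show ?thesis .
qed

lemma grid_count_block_le: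
  assumes "0 < \<delta>" "\<delta> \<le> 1"
  shows "real (grid_count \<delta> (block k)) \<le> 6 * \<delta> powr (- a)"
proof -
  have "1 \<le> \<delta> powr (- a)" using assms a_pos by (intro one_le_powr_neg) auto
  then show ?thesis
    using grid_count_block_le_coarse[OF assms(1), of k] grid_count_block_le_medium[of k \<delta>]
      grid_count_block_le_fine[OF assms(1), of k]
    by (cases "gap k \<le> \<delta>"; cases "spacing k \<le> \<delta>") auto
qed

lemma card_graph_of_le:
  assumes "finite B"
  shows "card (graph_of B f) \<le> card B"
proof -
  have "graph_of B f = (\<lambda>x. (x, f x)) ` B" by (auto simp: graph_of_def)
  then show ?thesis using card_image_le[OF assms] by simp
qed

lemma grid_count_graph_block_le:
  assumes "0 < \<delta>" "\<delta> \<le> 1" "M \<ge> 0" and bound: "\<And>x. x \<in> block k \<Longrightarrow> \<bar>f x\<bar> \<le> M"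
  shows "real (grid_count \<delta> (graph_of (block k) f)) \<le> (8 * M + 8) * \<delta> powr (- b)"
proof (cases "gap k \<le> \<delta>")
  case True
  have "graph_of (block k) f \<subseteq> {start k .. start k + real (ncols k) * gap k} \<times> {- M .. M}"
    using block_subset_interval bound by (force simp: graph_of_def abs_le_iff)
  then have "real (grid_count \<delta> (graph_of (block k) f))
      \<le> ((start k + real (ncols k) * gap k - start k) / \<delta> + 2) * ((M - - M) / \<delta> + 2)"
    by (rule grid_count_rectangle_le(2)[OF assms(1)]) (use gap_pos[of k] assms(3) in auto)
  also have "\<dots> = (real (ncols k) * gap k / \<delta> + 2) * (2 * M / \<delta> + 2)" by simp
  also have "\<dots> \<le> (4 * \<delta> powr (1 - b)) * ((2 * M + 2) / \<delta>)"
  proof (rule mult_mono)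
    have "real (ncols k) * gap k \<le> 2 * \<delta> powr (2 - b)"
      using block_width_le_b[of k] powr_mono2[of "2 - b" "gap k" \<delta>] True gap_pos[of k] b_le a_le_1 by force
    moreover have "1 \<le> \<delta> powr (1 - b)" using one_le_powr_neg[OF assms(1,2), of "b - 1"] one_le_b by simp
    moreover have "\<delta> powr (2 - b) = \<delta> * \<delta> powr (1 - b)"
      using powr_one_minus[OF assms(1), of "b - 1"] by simp
    ultimately have "real (ncols k) * gap k / \<delta> \<le> 2 * \<delta> powr (1 - b)"
      using assms(1) by (simp add: divide_le_eq mult.commute mult.left_commute)
    then show "real (ncols k) * gap k / \<delta> + 2 \<le> 4 * \<delta> powr (1 - b)"
      using \<open>1 \<le> \<delta> powr (1 - b)\<close> by linarith
    show "2 * M / \<delta> + 2 \<le> (2 * M + 2) / \<delta>" using assms(1,2) by (simp add: field_simps)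
  qed (use assms in auto)
  also have "\<dots> = (8 * M + 8) * \<delta> powr (- b)"
    using assms(1) powr_one_minus[OF assms(1), of b] by (simp add: field_simps)
  finally show ?thesis .
next
  case False
  have "finite (graph_of (block k) f)" using finite_block by (simp add: graph_of_def)
  then have "grid_count \<delta> (graph_of (block k) f) \<le> 4 * (ncols k * colsize k)"
    using grid_count_finite_le_prod[OF assms(1)] card_graph_of_le[OF finite_block, of k f]
    unfolding card_block by (meson le_trans mult_le_mono2)
  then have "real (grid_count \<delta> (graph_of (block k) f)) \<le> real (4 * (ncols k * colsize k))"
    by (rule of_nat_mono)
  also have "\<dots> \<le> 8 * gap k powr (- b)" using ncols_mult_colsize_le_gap[of k] by (simp add: mult.commute)
  also have "\<dots> \<le> 8 * \<delta> powr (- b)" using False assms(1) one_le_b by (simp add: powr_mono2')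
  also have "\<dots> \<le> (8 * M + 8) * \<delta> powr (- b)" using assms(3) by (simp add: algebra_simps)
  finally show ?thesis .
qed

lemma le_ln_if_less_gap:
  assumes "2 \<le> k" "0 < \<delta>" "\<delta> < gap k"
  shows "real k \<le> ln (1/\<delta>)"
proof -
  have "ln \<delta> < ln (gap k)" using assms gap_pos[of k] by simp
  also have "ln (gap k) = - ((real k)^2) * ln 2" by (simp add: gap_def ln_powr)
  finally have "(real k)^2 * ln 2 < ln (1/\<delta>)" using assms by (simp add: ln_div)
  moreover have "real k \<le> (real k)^2 * ln 2"
  proof -
    have "ln (1/2::real) \<le> 1/2 - 1" by (rule ln_le_minus_one) simp
    then have "1/2 \<le> ln (2::real)" by (simp add: ln_div)
    moreover have "real k \<le> (real k)^2 * (1/2)" using assms(1) by (simp add: power2_eq_square)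
    ultimately show ?thesis by (smt (verit) mult_left_mono zero_le_power2)
  qed
  ultimately show ?thesis by linarith
qed

text \<open>At scale \<open>\<delta>\<close> only the blocks \<open>3..K\<close> with \<open>\<delta> < gap k\<close> need to be counted
  individually; there are at most \<open>ln (1/\<delta>)\<close> of them.\<close>

lemma last_coarse_block_exists:
  assumes "0 < \<delta>" "\<delta> < gap 3"
  obtains K where "3 \<le> K" "gap (Suc K) \<le> \<delta>" "real K \<le> ln (1/\<delta>)"
proof -
  define S where "S = {k. 3 \<le> k \<and> \<delta> < gap k}"
  have "S \<subseteq> {..nat \<lfloor>ln (1/\<delta>)\<rfloor>}"
  proof
    fix k assume "k \<in> S"
    then have "real k \<le> ln (1/\<delta>)" using le_ln_if_less_gap assms(1) by (auto simp: S_def)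
    then show "k \<in> {..nat \<lfloor>ln (1/\<delta>)\<rfloor>}" by (simp add: le_nat_iff le_floor_iff)
  qed
  then have fin: "finite S" using finite_subset by blast
  have "3 \<in> S" using assms by (simp add: S_def)
  define K where "K = Max S"
  have KS: "K \<in> S" unfolding K_def using fin \<open>3 \<in> S\<close> by (intro Max_in) auto
  have "Suc K \<notin> S" using Max_ge[OF fin, of "Suc K"] unfolding K_def[symmetric] by auto
  then show ?thesis using that KS le_ln_if_less_gap assms(1) by (auto simp: S_def)
qed

lemma X_subset_head_tail:
  assumes "3 \<le> K"
  shows "X \<subseteq> (\<Union>k\<in>{3..K}. block k) \<union> {0 .. 2 * start (Suc K)}"
proof
  fix x assume "x \<in> X"
  then consider "x = 0" | k where "3 \<le> k" "x \<in> block k" by (auto simp: X_def)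
  then show "x \<in> (\<Union>k\<in>{3..K}. block k) \<union> {0 .. 2 * start (Suc K)}"
  proof cases
    case 1
    then show ?thesis using start_pos[of "Suc K"] by simp
  next
    case 2
    show ?thesis
    proof (cases "k \<le> K")
      case False
      then have "start k \<le> start (Suc K)" by (intro start_antimono) simp
      then show ?thesis using block_range[OF 2(2)] start_pos[of k] by auto
    qed (use 2 in auto)
  qed
qed

lemma tail_length_div_le:
  assumes "0 < \<delta>" "gap (Suc K) \<le> \<delta>"
  shows "2 * start (Suc K) / \<delta> \<le> 8 * \<delta> powr (1 - b)"
proof -
  have "gap (Suc K) powr (2 - b) \<le> \<delta> powr (2 - b)"
    using assms gap_pos[of "Suc K"] b_le a_le_1 by (intro powr_mono2) auto
  then have "2 * start (Suc K) \<le> \<delta> * (8 * \<delta> powr (1 - b))"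
    using start_le_gap_powr[of "Suc K"] powr_one_minus[OF assms(1), of "b - 1"] by simp
  then show ?thesis using assms(1) by (simp add: divide_le_eq mult.commute)
qed

lemma grid_count_X_le:
  assumes "0 < \<delta>" "\<delta> < gap 3"
  shows "real (grid_count \<delta> X) \<le> 16 * ln (1/\<delta>) * \<delta> powr (- a)"
proof -
  obtain K where K: "3 \<le> K" "gap (Suc K) \<le> \<delta>" "real K \<le> ln (1/\<delta>)"
    using last_coarse_block_exists[OF assms] .
  have "\<delta> \<le> 1" using assms(2) gap_le_1[of 3] by simp
  have ge1: "1 \<le> \<delta> powr (- a)" using assms(1) \<open>\<delta> \<le> 1\<close> a_pos by (intro one_le_powr_neg) auto
  let ?T = "{0 .. 2 * start (Suc K)}"
  have "(\<Union>k\<in>{3..K}. block k) \<union> ?T \<subseteq> {0..1}"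
    using block_subset_unit start_le_half[of "Suc K"] K(1) by fastforce
  then have "finite (grid_cells \<delta> ((\<Union>k\<in>{3..K}. block k) \<union> ?T))"
    by (rule grid_count_interval_le(1)[OF assms(1)]) simp
  then have "real (grid_count \<delta> X) \<le> (\<Sum>k\<in>{3..K}. real (grid_count \<delta> (block k))) + real (grid_count \<delta> ?T)"
    using X_subset_head_tail[OF K(1)] by (intro grid_count_cover_le) simp_all
  also have "\<dots> \<le> real K * (6 * \<delta> powr (- a)) + 10 * \<delta> powr (- a)"
  proof (rule add_mono)
    have "(\<Sum>k\<in>{3..K}. real (grid_count \<delta> (block k))) \<le> real (card {3..K}) * (6 * \<delta> powr (- a))"
      using grid_count_block_le[OF assms(1) \<open>\<delta> \<le> 1\<close>] by (rule sum_bounded_above)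
    also have "\<dots> \<le> real K * (6 * \<delta> powr (- a))" using ge1 by (intro mult_right_mono) auto
    finally show "(\<Sum>k\<in>{3..K}. real (grid_count \<delta> (block k))) \<le> real K * (6 * \<delta> powr (- a))" .
    have "\<delta> powr (1 - b) \<le> \<delta> powr (- a)" using assms(1) \<open>\<delta> \<le> 1\<close> b_le by (intro powr_mono') auto
    then show "real (grid_count \<delta> ?T) \<le> 10 * \<delta> powr (- a)"
      using grid_count_interval_le(2)[OF assms(1) order.refl, of 0 "2 * start (Suc K)"]
        tail_length_div_le[OF assms(1) K(2)] start_pos[of "Suc K"] ge1 by simp
  qed
  also have "\<dots> \<le> 16 * real K * \<delta> powr (- a)"
    using mult_right_mono[of 1 "real K" "\<delta> powr (- a)"] K(1) ge1 by (simp add: algebra_simps)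
  also have "\<dots> \<le> 16 * ln (1/\<delta>) * \<delta> powr (- a)" using K(3) ge1 by (intro mult_right_mono) auto
  finally show ?thesis .
qed

lemma upper_box_dim_X_le: "upper_box_dim X \<le> ereal a"
  using a_pos gap_pos[of 3] grid_count_X_le by (intro upper_box_dim_le_powr[where C = 16 and r = "gap 3"]) auto

lemma graph_subset_head_tail:
  assumes "3 \<le> K" and bound: "\<And>x. x \<in> X \<Longrightarrow> \<bar>f x\<bar> \<le> M"
  shows "graph_of X f \<subseteq> (\<Union>k\<in>{3..K}. graph_of (block k) f) \<union> {0 .. 2 * start (Suc K)} \<times> {- M .. M}"
proof
  fix z assume "z \<in> graph_of X f"
  then obtain x where x: "x \<in> X" "z = (x, f x)" by (auto simp: graph_of_def)
  then have "\<bar>f x\<bar> \<le> M" using bound by blast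
  with x X_subset_head_tail[OF assms(1)]
  show "z \<in> (\<Union>k\<in>{3..K}. graph_of (block k) f) \<union> {0 .. 2 * start (Suc K)} \<times> {- M .. M}"
    by (auto simp: graph_of_def abs_le_iff)
qed

lemma grid_count_tail_rectangle_le:
  assumes "0 < \<delta>" "\<delta> \<le> 1" "M \<ge> 0" "gap (Suc K) \<le> \<delta>"
  shows "real (grid_count \<delta> ({0 .. 2 * start (Suc K)} \<times> {- M .. M})) \<le> (20 * M + 20) * \<delta> powr (- b)"
proof -
  have "real (grid_count \<delta> ({0 .. 2 * start (Suc K)} \<times> {- M .. M}))
      \<le> ((2 * start (Suc K) - 0) / \<delta> + 2) * ((M - - M) / \<delta> + 2)"
    by (rule grid_count_rectangle_le(2)[OF assms(1) order.refl]) (use start_pos[of "Suc K"] assms(3) in auto)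
  also have "\<dots> \<le> (10 * \<delta> powr (1 - b)) * ((2 * M + 2) / \<delta>)"
  proof (rule mult_mono)
    have "1 \<le> \<delta> powr (1 - b)" using one_le_powr_neg[OF assms(1,2), of "b - 1"] one_le_b by simp
    then show "(2 * start (Suc K) - 0) / \<delta> + 2 \<le> 10 * \<delta> powr (1 - b)"
      using tail_length_div_le[OF assms(1,4)] by simp
    show "(M - - M) / \<delta> + 2 \<le> (2 * M + 2) / \<delta>" using assms(1,2) by (simp add: field_simps)
  qed (use assms(1,3) in auto)
  also have "\<dots> = (20 * M + 20) * \<delta> powr (- b)"
    using assms(1) powr_one_minus[OF assms(1), of b] by (simp add: field_simps)
  finally show ?thesis .
qed

lemma grid_count_graph_le:
  assumes "0 < \<delta>" "\<delta> < gap 3" "M \<ge> 0" and bound: "\<And>x. x \<in> X \<Longrightarrow> \<bar>f x\<bar> \<le> M"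
  shows "real (grid_count \<delta> (graph_of X f)) \<le> (28 * M + 28) * ln (1/\<delta>) * \<delta> powr (- b)"
proof -
  obtain K where K: "3 \<le> K" "gap (Suc K) \<le> \<delta>" "real K \<le> ln (1/\<delta>)"
    using last_coarse_block_exists[OF assms(1,2)] .
  have "\<delta> \<le> 1" using assms(2) gap_le_1[of 3] by simp
  have ge1: "1 \<le> \<delta> powr (- b)" using assms(1) \<open>\<delta> \<le> 1\<close> one_le_b by (intro one_le_powr_neg) auto
  let ?T = "{0 .. 2 * start (Suc K)} \<times> {- M .. M}"
  have "graph_of (block k) f \<subseteq> {0..1} \<times> {- M .. M}" if "k \<in> {3..K}" for k
    using that block_subset_unit[of k] block_subset_X[of k] bound by (force simp: graph_of_def abs_le_iff)
  moreover have "?T \<subseteq> {0..1} \<times> {- M .. M}" using start_le_half[of "Suc K"] K(1) by auto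
  ultimately have "(\<Union>k\<in>{3..K}. graph_of (block k) f) \<union> ?T \<subseteq> {0..1} \<times> {- M .. M}" by blast
  then have "finite (grid_cells \<delta> ((\<Union>k\<in>{3..K}. graph_of (block k) f) \<union> ?T))"
    by (rule grid_count_rectangle_le(1)[OF assms(1)]) (use assms(3) in simp_all)
  then have "real (grid_count \<delta> (graph_of X f))
      \<le> (\<Sum>k\<in>{3..K}. real (grid_count \<delta> (graph_of (block k) f))) + real (grid_count \<delta> ?T)"
    using graph_subset_head_tail[OF K(1) bound] by (intro grid_count_cover_le) simp_all
  also have "\<dots> \<le> real (card {3..K}) * ((8 * M + 8) * \<delta> powr (- b)) + (20 * M + 20) * \<delta> powr (- b)"
  proof (rule add_mono[OF sum_bounded_above])
    fix k assume "k \<in> {3..K}"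
    then have "\<And>x. x \<in> block k \<Longrightarrow> \<bar>f x\<bar> \<le> M" using block_subset_X[of k] bound by auto
    then show "real (grid_count \<delta> (graph_of (block k) f)) \<le> (8 * M + 8) * \<delta> powr (- b)"
      by (rule grid_count_graph_block_le[OF assms(1) \<open>\<delta> \<le> 1\<close> assms(3)])
  qed (rule grid_count_tail_rectangle_le[OF assms(1) \<open>\<delta> \<le> 1\<close> assms(3) K(2)])
  also have "\<dots> \<le> real K * ((8 * M + 8) * \<delta> powr (- b)) + real K * ((20 * M + 20) * \<delta> powr (- b))"
  proof (rule add_mono)
    show "real (card {3..K}) * ((8 * M + 8) * \<delta> powr (- b)) \<le> real K * ((8 * M + 8) * \<delta> powr (- b))"
      using ge1 assms(3) by (intro mult_right_mono) auto
    show "(20 * M + 20) * \<delta> powr (- b) \<le> real K * ((20 * M + 20) * \<delta> powr (- b))"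
      using mult_right_mono[of 1 "real K" "(20 * M + 20) * \<delta> powr (- b)"] K(1) ge1 assms(3) by simp
  qed
  also have "\<dots> = real K * ((28 * M + 28) * \<delta> powr (- b))" by (simp add: algebra_simps)
  also have "\<dots> \<le> ln (1/\<delta>) * ((28 * M + 28) * \<delta> powr (- b))"
    using K(3) ge1 assms(3) by (intro mult_right_mono) auto
  finally show ?thesis by (simp add: mult_ac)
qed

lemma upper_box_dim_graph_le:
  assumes "uniformly_continuous_on X f"
  shows "upper_box_dim (graph_of X f) \<le> ereal b"
proof -
  have "compact (f ` X)"
    using compact_X uniformly_continuous_imp_continuous[OF assms] by (rule compact_continuous_image[rotated])
  then obtain B where B: "\<And>x. x \<in> X \<Longrightarrow> \<bar>f x\<bar> \<le> B"
    using compact_imp_bounded bounded_real by (metis imageI)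
  let ?M = "max B 0"
  have "\<And>x. x \<in> X \<Longrightarrow> \<bar>f x\<bar> \<le> ?M" using B by force
  then show ?thesis
    using one_le_b gap_pos[of 3] grid_count_graph_le[of _ ?M f]
    by (intro upper_box_dim_le_powr[where C = "28 * ?M + 28" and r = "gap 3"]) auto
qed

lemma upper_graph_box_dim_X: "upper_graph_box_dim X = ereal b"
  unfolding upper_graph_box_dim_def
proof (rule antisym)
  show "(SUP f\<in>{f. uniformly_continuous_on X f}. upper_box_dim (graph_of X f)) \<le> ereal b"
    by (rule SUP_least) (auto intro: upper_box_dim_graph_le)
  show "ereal b \<le> (SUP f\<in>{f. uniformly_continuous_on X f}. upper_box_dim (graph_of X f))"
    using uniformly_continuous_on_saw upper_box_dim_graph_saw_ge by (intro SUP_upper2[where i = saw]) auto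
qed

end

theorem theorem3:
  fixes a b :: real
  assumes "0 < a" "a \<le> 1" "max (2 * a) 1 \<le> b" "b \<le> a + 1"
  shows "\<exists>X. X \<subseteq> {0..1} \<and> compact X \<and>
           upper_box_dim X = ereal a \<and> upper_graph_box_dim X = ereal b"
proof -
  interpret sawtooth_example a b
    using assms by unfold_locales auto
  have "upper_box_dim X = ereal a"
    using upper_box_dim_X_le upper_box_dim_X_ge by (rule antisym)
  then show ?thesis
    using X_subset_unit compact_X upper_graph_box_dim_X by blast
qed

end
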